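(* Let $A$ be a left counital bialgebra. Then $\varepsilon_T$ satisfies left counicity with respect to $\Delta_T$: $(\varepsilon_T\otimes\mathrm{id})\Delta_T=\beta_\ell$, where $\beta_\ell:Ш(A)\to\mathbf{k}\otimes Ш(A)$, $\mathfrak a\mapsto 1\otimes\mathfrak a$.
   Context: Throughout, $\mathbf{k}$ is a commutative unital ring, all algebras are unital commutative $\mathbf{k}$-algebras, tensor products are over $\mathbf{k}$. A left counital bialgebra $(H,m,\mu,\Delta,\varepsilon)$ is an algebra $H$ with algebra homomorphisms $\Delta:H\to H\otimes H$ (coassociative) and $\varepsilon:H\to\mathbf{k}$ satisfying left counicity $(\varepsilon\otimes\mathrm{id})\Delta=\beta_\ell$, where $\beta_\ell(u)=1\otimes u$; right counicity is not required. For an algebra $A$ with unit $1_A$, $Ш(A)=\bigoplus_{n\ge1}A^{\otimes n}$, $P_r(\mathfrak a)=1_A\otimes\mathfrak a$, and the product $\diamond$ is defined bilinearly on pure tensors $\mathfrak a=a_1\otimes\mathfrak a'\in A^{\otimes m}$, $\mathfrak b=b_1\otimes\mathfrak b'\in A^{\otimes n}$ by: $a_1b_1$ if $m=n=1$; $a_1b_1\otimes\mathfrak b'$ if $m=1,n\ge2$; $a_1b_1\otimes\mathfrak a'$ if $m\ge2,n=1$; $a_1b_1\otimes\big(\mathfrak a'\diamond(1_A\otimes\mathfrak b')+(1_A\otimes\mathfrak a')\diamond\mathfrak b'-1_A\otimes(\mathfrak a'\diamond\mathfrak b')\big)$ if $m,n\ge2$. $Ш(A)\otimes Ш(A)$ has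 the product $\bullet$, $(x\otimes y)\bullet(x'\otimes y')=(x\diamond x')\otimes(y\diamond y')$, and $A\otimes A\subseteq Ш(A)\otimes Ш(A)$ via $A=A^{\otimes1}$. When $A$ is a left counital bialgebra with coproduct $\Delta_A$ and counit $\varepsilon_A$: the linear map $\Delta_T:Ш(A)\to Ш(A)\otimes Ш(A)$ is defined on pure tensors by induction on tensor length: $\Delta_T(a)=\Delta_A(a)$ for $a\in A$, and for $\mathfrak a'\in A^{\otimes n}$, $\Delta_T(1_A\otimes\mathfrak a')=(\mathrm{id}\otimes P_r)\Delta_T(\mathfrak a')$ and $\Delta_T(a_1\otimes\mathfrak a')=\Delta_A(a_1)\bullet(\mathrm{id}\otimes P_r)\Delta_T(\mathfrak a')$; and $\varepsilon_T:Ш(A)\to\mathbf{k}$ is the linear map $\varepsilon_T(a_1\otimes\cdots\otimes a_n)=\varepsilon_A(a_1)\cdots\varepsilon_A(a_n)$. *)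

theory Defs
  imports Main "HOL-Library.Poly_Mapping"
begin

text \<open>The ground ring k is a type 'k of class comm_ring_1.  The free k-module on a set X
  is modelled by the finitely supported functions X =>0 'k.\<close>

definition kscale :: "'k::comm_ring_1 \<Rightarrow> ('x \<Rightarrow>\<^sub>0 'k) \<Rightarrow> ('x \<Rightarrow>\<^sub>0 'k)" where
  "kscale c p = Poly_Mapping.map (\<lambda>v. c * v) p"

definition klin :: "('x \<Rightarrow> ('y \<Rightarrow>\<^sub>0 'k::comm_ring_1)) \<Rightarrow> ('x \<Rightarrow>\<^sub>0 'k) \<Rightarrow> ('y \<Rightarrow>\<^sub>0 'k)" where
  "klin f p = (\<Sum>x\<in>Poly_Mapping.keys p. kscale (Poly_Mapping.lookup p x) (f x))"

definition kbilin :: "('x \<Rightarrow> 'y \<Rightarrow> ('z \<Rightarrow>\<^sub>0 'k::comm_ring_1))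
    \<Rightarrow> ('x \<Rightarrow>\<^sub>0 'k) \<Rightarrow> ('y \<Rightarrow>\<^sub>0 'k) \<Rightarrow> ('z \<Rightarrow>\<^sub>0 'k)" where
  "kbilin f p q = klin (\<lambda>x. klin (\<lambda>y. f x y) q) p"

definition basis :: "'x \<Rightarrow> ('x \<Rightarrow>\<^sub>0 'k::comm_ring_1)" where
  "basis x = Poly_Mapping.single x 1"

inductive_set kspan :: "('x \<Rightarrow>\<^sub>0 'k::comm_ring_1) set \<Rightarrow> ('x \<Rightarrow>\<^sub>0 'k) set"
  for G :: "('x \<Rightarrow>\<^sub>0 'k) set" where
  kspan_zero: "0 \<in> kspan G"
| kspan_gen: "g \<in> G \<Longrightarrow> g \<in> kspan G"
| kspan_add: "p \<in> kspan G \<Longrightarrow> q \<in> kspan G \<Longrightarrow> p + q \<in> kspan G"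
| kspan_scale: "p \<in> kspan G \<Longrightarrow> kscale c p \<in> kspan G"

text \<open>Multilinearity relations: for every slot (a map f placing an element of A in one
  tensor factor), additivity and k-homogeneity in that slot.  The k-algebra structure
  of A is given by the structure map phi : k -> A (so c . a = phi c * a).\<close>
definition lin_gens :: "('k::comm_ring_1 \<Rightarrow> 'a::comm_ring_1) \<Rightarrow> ('a \<Rightarrow> 'x) set \<Rightarrow> ('x \<Rightarrow>\<^sub>0 'k) set" where
  "lin_gens phi C =
     {basis (f (a + b)) - basis (f a) - basis (f b) | f a b. f \<in> C}
   \<union> {basis (f (phi c * a)) - kscale c (basis (f a)) | f c a. f \<in> C}"

text \<open>A (x) A = free module on A x A modulo bilinearity.\<close>
definition rel2 :: "('k::comm_ring_1 \<Rightarrow> 'a::comm_ring_1) \<Rightarrow> ('a \<times> 'a \<Rightarrow>\<^sub>0 'k) set" where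
  "rel2 phi = kspan (lin_gens phi ((\<lambda>y a. (a, y)) ` UNIV \<union> (\<lambda>x a. (x, a)) ` UNIV))"

text \<open>A (x) A (x) A = free module on A x A x A modulo trilinearity.\<close>
definition rel3 :: "('k::comm_ring_1 \<Rightarrow> 'a::comm_ring_1) \<Rightarrow> ('a \<times> 'a \<times> 'a \<Rightarrow>\<^sub>0 'k) set" where
  "rel3 phi = kspan (lin_gens phi ((\<lambda>(y,z) a. (a, y, z)) ` UNIV \<union> (\<lambda>(x,z) a. (x, a, z)) ` UNIV
                                   \<union> (\<lambda>(x,y) a. (x, y, a)) ` UNIV))"

text \<open>Sha(A) = direct sum of the A^(x n), n >= 1 = free module on lists of elements of A
  modulo multilinearity (within each tensor length) and modulo the empty list
  (which does not correspond to any tensor of length >= 1).\<close>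
definition sha_rel :: "('k::comm_ring_1 \<Rightarrow> 'a::comm_ring_1) \<Rightarrow> ('a list \<Rightarrow>\<^sub>0 'k) set" where
  "sha_rel phi = kspan (lin_gens phi {(\<lambda>a. xs @ a # ys) | xs ys. True} \<union> {basis []})"

text \<open>Sha(A) (x) Sha(A) = free module on pairs of lists modulo multilinearity in every
  slot of either factor, and modulo pairs with an empty component.\<close>
definition sha2_rel :: "('k::comm_ring_1 \<Rightarrow> 'a::comm_ring_1) \<Rightarrow> ('a list \<times> 'a list \<Rightarrow>\<^sub>0 'k) set" where
  "sha2_rel phi = kspan (lin_gens phi
        ({(\<lambda>a. (xs @ a # ys, zs)) | xs ys zs. True} \<union> {(\<lambda>a. (zs, xs @ a # ys)) | xs ys zs. True})
      \<union> {basis ([], l) | l. True} \<union> {basis (l, []) | l. True})"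

text \<open>A commutative unital k-algebra A (type 'a with structure map phi : k -> A, a unital
  ring homomorphism), with coproduct Delta : A -> A (x) A (given by representatives in the
  free module on A x A) and counit eps : A -> k.\<close>

definition tprod2 :: "('a::comm_ring_1 \<times> 'a \<Rightarrow>\<^sub>0 'k::comm_ring_1) \<Rightarrow> ('a \<times> 'a \<Rightarrow>\<^sub>0 'k) \<Rightarrow> ('a \<times> 'a \<Rightarrow>\<^sub>0 'k)" where
  "tprod2 = kbilin (\<lambda>(x, y) (x', y'). basis (x * x', y * y'))"

definition left_counital_bialgebra ::
  "('k::comm_ring_1 \<Rightarrow> 'a::comm_ring_1) \<Rightarrow> ('a \<Rightarrow> ('a \<times> 'a \<Rightarrow>\<^sub>0 'k)) \<Rightarrow> ('a \<Rightarrow> 'k) \<Rightarrow> bool" where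
  "left_counital_bialgebra phi Delta eps \<longleftrightarrow>
     \<comment> \<open>phi : k -> A is a unital ring homomorphism (A is a k-algebra)\<close>
     phi 1 = 1 \<and> (\<forall>c d. phi (c + d) = phi c + phi d) \<and> (\<forall>c d. phi (c * d) = phi c * phi d)
     \<comment> \<open>Delta is a unital k-algebra homomorphism A -> A (x) A\<close>
   \<and> (\<forall>a b. Delta (a + b) - Delta a - Delta b \<in> rel2 phi)
   \<and> (\<forall>c a. Delta (phi c * a) - kscale c (Delta a) \<in> rel2 phi)
   \<and> (\<forall>a b. Delta (a * b) - tprod2 (Delta a) (Delta b) \<in> rel2 phi)
   \<and> Delta 1 - basis (1, 1) \<in> rel2 phi
     \<comment> \<open>coassociativity (Delta (x) id) Delta = (id (x) Delta) Delta\<close>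
   \<and> (\<forall>a. klin (\<lambda>(x, y). klin (\<lambda>(p, q). basis (p, q, y)) (Delta x)) (Delta a)
         - klin (\<lambda>(x, y). klin (\<lambda>(p, q). basis (x, p, q)) (Delta y)) (Delta a) \<in> rel3 phi)
     \<comment> \<open>eps is a unital k-algebra homomorphism A -> k\<close>
   \<and> (\<forall>a b. eps (a + b) = eps a + eps b) \<and> (\<forall>c a. eps (phi c * a) = c * eps a)
   \<and> (\<forall>a b. eps (a * b) = eps a * eps b) \<and> eps 1 = 1
     \<comment> \<open>left counicity (eps (x) id) Delta = beta_l, with k (x) A identified with A\<close>
   \<and> (\<forall>a. (\<Sum>(x, y)\<in>Poly_Mapping.keys (Delta a). phi (Poly_Mapping.lookup (Delta a) (x, y)) * phi (eps x) * y) = a)"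

text \<open>a (x) -- : Sha(A) -> Sha(A) on basis elements (lists of length >= 1).\<close>
definition prepend :: "'a \<Rightarrow> 'a list \<Rightarrow> ('a list \<Rightarrow>\<^sub>0 'k::comm_ring_1)" where
  "prepend a l = (if l = [] then 0 else basis (a # l))"

fun shuf :: "'a::comm_ring_1 list \<Rightarrow> 'a list \<Rightarrow> ('a list \<Rightarrow>\<^sub>0 'k::comm_ring_1)" where
  "shuf (a # as) (b # bs) =
     (if as = [] then basis ((a * b) # bs)
      else if bs = [] then basis ((a * b) # as)
      else klin (prepend (a * b))
             (shuf as (1 # bs) + shuf (1 # as) bs - klin (prepend 1) (shuf as bs)))"
| "shuf _ _ = 0"

definition diamond :: "('a::comm_ring_1 list \<Rightarrow>\<^sub>0 'k::comm_ring_1) \<Rightarrow> ('a list \<Rightarrow>\<^sub>0 'k) \<Rightarrow> ('a list \<Rightarrow>\<^sub>0 'k)" where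
  "diamond = kbilin shuf"

definition bullet :: "('a::comm_ring_1 list \<times> 'a list \<Rightarrow>\<^sub>0 'k::comm_ring_1)
     \<Rightarrow> ('a list \<times> 'a list \<Rightarrow>\<^sub>0 'k) \<Rightarrow> ('a list \<times> 'a list \<Rightarrow>\<^sub>0 'k)" where
  "bullet = kbilin (\<lambda>(x, y) (x', y'). kbilin (\<lambda>u v. basis (u, v)) (shuf x x') (shuf y y'))"

text \<open>The inclusion A (x) A into Sha(A) (x) Sha(A) via A = A^(x 1).\<close>
definition emb2 :: "('a \<times> 'a \<Rightarrow>\<^sub>0 'k::comm_ring_1) \<Rightarrow> ('a list \<times> 'a list \<Rightarrow>\<^sub>0 'k)" where
  "emb2 = klin (\<lambda>(x, y). basis ([x], [y]))"

text \<open>id (x) P_r, where P_r(u) = 1_A (x) u.\<close>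
definition id_Pr :: "('a::comm_ring_1 list \<times> 'a list \<Rightarrow>\<^sub>0 'k::comm_ring_1) \<Rightarrow> ('a list \<times> 'a list \<Rightarrow>\<^sub>0 'k)" where
  "id_Pr = klin (\<lambda>(x, y). if y = [] then 0 else basis (x, 1 # y))"

fun DeltaT_basis :: "('a::comm_ring_1 \<Rightarrow> ('a \<times> 'a \<Rightarrow>\<^sub>0 'k::comm_ring_1)) \<Rightarrow> 'a list
     \<Rightarrow> ('a list \<times> 'a list \<Rightarrow>\<^sub>0 'k)" where
  "DeltaT_basis Delta [] = 0"
| "DeltaT_basis Delta [a] = emb2 (Delta a)"
| "DeltaT_basis Delta (a # b # l) =
     (if a = 1 then id_Pr (DeltaT_basis Delta (b # l))
      else bullet (emb2 (Delta a)) (id_Pr (DeltaT_basis Delta (b # l))))"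

definition DeltaT :: "('a::comm_ring_1 \<Rightarrow> ('a \<times> 'a \<Rightarrow>\<^sub>0 'k::comm_ring_1))
     \<Rightarrow> ('a list \<Rightarrow>\<^sub>0 'k) \<Rightarrow> ('a list \<times> 'a list \<Rightarrow>\<^sub>0 'k)" where
  "DeltaT Delta = klin (DeltaT_basis Delta)"

definition epsT_basis :: "('a \<Rightarrow> 'k::comm_ring_1) \<Rightarrow> 'a list \<Rightarrow> 'k" where
  "epsT_basis eps l = (if l = [] then 0 else prod_list (map eps l))"

text \<open>eps_T (x) id : Sha(A) (x) Sha(A) -> k (x) Sha(A), where k (x) Sha(A) is identified
  with Sha(A) via c (x) u |-> c u.\<close>
definition epsT_tensor_id :: "('a \<Rightarrow> 'k::comm_ring_1) \<Rightarrow> ('a list \<times> 'a list \<Rightarrow>\<^sub>0 'k) \<Rightarrow> ('a list \<Rightarrow>\<^sub>0 'k)" where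
  "epsT_tensor_id eps = klin (\<lambda>(x, y). kscale (epsT_basis eps x) (basis y))"

end

theory Submission
  imports Defs
begin

text \<open>Both sides are compared on each tensor \<open>a\<^sub>1 \<otimes> \<dots> \<otimes> a\<^sub>n\<close>, modulo the multilinearity
  relations, by induction along the recursion defining \<open>\<Delta>\<^sub>T\<close>.  For \<open>n = 1\<close> the claim is the
  left counicity of \<open>A\<close>.  The map \<open>\<epsilon>\<^sub>T \<otimes> id\<close> commutes with \<open>id \<otimes> P\<^sub>r\<close>, which settles the case
  \<open>a\<^sub>1 = 1\<^sub>A\<close>.  Otherwise, multiplying by \<open>\<Delta>\<^sub>A(a\<^sub>1) = \<Sum> x \<otimes> y\<close> merges \<open>x\<close> into the first
  factor of the left component, whose \<open>\<epsilon>\<^sub>T\<close> therefore picks up the factor \<open>\<epsilon>\<^sub>A(x)\<close>, and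
  prefixes \<open>y\<close> to the right component.  Up to the induction hypothesis the result is
  \<open>\<Sum> \<epsilon>\<^sub>A(x) y \<otimes> a\<^sub>2 \<otimes> \<dots> \<otimes> a\<^sub>n\<close>, which is \<open>a\<^sub>1 \<otimes> \<dots> \<otimes> a\<^sub>n\<close> by linearity in the first slot and
  left counicity of \<open>A\<close>.\<close>

lemma lookup_kscale [simp]: "Poly_Mapping.lookup (kscale c p) x = c * Poly_Mapping.lookup p x"
  unfolding kscale_def by (simp add: map.rep_eq when_def)

lemma kscale_add: "kscale c (p + q) = kscale c p + kscale c q"
  by (rule poly_mapping_eqI) (simp add: lookup_add distrib_left)

lemma kscale_diff: "kscale c (p - q) = kscale c p - kscale c q"
  by (rule poly_mapping_eqI) (simp add: lookup_minus right_diff_distrib)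

lemma kscale_zero [simp]: "kscale c 0 = 0"
  by (rule poly_mapping_eqI) simp

lemma kscale_zero_left [simp]: "kscale 0 p = 0"
  by (rule poly_mapping_eqI) simp

lemma kscale_one [simp]: "kscale 1 p = p"
  by (rule poly_mapping_eqI) simp

lemma kscale_minus_one [simp]: "kscale (- 1) p = - p"
  by (rule poly_mapping_eqI) simp

lemma kscale_kscale [simp]: "kscale c (kscale d p) = kscale (c * d) p"
  by (rule poly_mapping_eqI) (simp add: mult.assoc)

lemma kscale_add_left: "kscale (c + d) p = kscale c p + kscale d p"
  by (rule poly_mapping_eqI) (simp add: lookup_add distrib_right)

lemma kscale_sum: "kscale c (sum f S) = (\<Sum>x\<in>S. kscale c (f x))"
  by (rule poly_mapping_eqI) (simp add: lookup_sum sum_distrib_left)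

lemma keys_kscale_subset: "Poly_Mapping.keys (kscale c p) \<subseteq> Poly_Mapping.keys p"
  by (auto simp: in_keys_iff)

lemma klin_eq_sum_superset:
  assumes "finite S" "Poly_Mapping.keys p \<subseteq> S"
  shows "klin f p = (\<Sum>x\<in>S. kscale (Poly_Mapping.lookup p x) (f x))"
  unfolding klin_def by (rule sum.mono_neutral_left) (auto simp: assms in_keys_iff)

lemma klin_zero [simp]: "klin f 0 = 0"
  by (simp add: klin_def)

lemma klin_basis [simp]: "klin f (basis x) = f x"
  by (simp add: klin_def basis_def)

lemma klin_add: "klin f (p + q) = klin f p + klin f q"
proof -
  let ?S = "Poly_Mapping.keys p \<union> Poly_Mapping.keys q"
  have "klin f (p + q) = (\<Sum>x\<in>?S. kscale (Poly_Mapping.lookup (p + q) x) (f x))"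
    by (rule klin_eq_sum_superset) (auto simp: keys_add)
  also have "\<dots> = (\<Sum>x\<in>?S. kscale (Poly_Mapping.lookup p x) (f x))
                 + (\<Sum>x\<in>?S. kscale (Poly_Mapping.lookup q x) (f x))"
    by (simp add: lookup_add kscale_add_left sum.distrib)
  also have "\<dots> = klin f p + klin f q"
    by (subst (1 2) klin_eq_sum_superset[of ?S]) auto
  finally show ?thesis .
qed

lemma klin_uminus: "klin f (- p) = - klin f p"
  using klin_add[of f p "- p"] by (simp add: eq_neg_iff_add_eq_0 add.commute)

lemma klin_diff: "klin f (p - q) = klin f p - klin f q"
  using klin_add[of f p "- q"] klin_uminus[of f q] by simp

lemma klin_kscale: "klin f (kscale c p) = kscale c (klin f p)"
proof -
  have "klin f (kscale c p)
      = (\<Sum>x\<in>Poly_Mapping.keys p. kscale (Poly_Mapping.lookup (kscale c p) x) (f x))"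
    by (rule klin_eq_sum_superset) (auto simp: keys_kscale_subset)
  then show ?thesis by (simp add: klin_def kscale_sum)
qed

lemma klin_sum: "klin f (sum g S) = (\<Sum>x\<in>S. klin f (g x))"
  by (induction S rule: infinite_finite_induct) (auto simp: klin_add)

lemma klin_klin: "klin g (klin f p) = klin (\<lambda>x. klin g (f x)) p"
  by (subst (2) klin_def, subst klin_def) (simp add: klin_sum klin_kscale)

lemma klin_cong: "(\<And>x. x \<in> Poly_Mapping.keys p \<Longrightarrow> f x = g x) \<Longrightarrow> klin f p = klin g p"
  by (simp add: klin_def)

lemma klin_basis_self: "klin basis p = p"
  by (rule poly_mapping_eqI)
    (auto simp: klin_def lookup_sum basis_def lookup_single when_def in_keys_iff if_distrib
          cong: if_cong)

lemma klin_fun_add: "klin (\<lambda>x. f x + g x) p = klin f p + klin g p"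
  by (simp add: klin_def kscale_add sum.distrib)

lemma klin_fun_diff: "klin (\<lambda>x. f x - g x) p = klin f p - klin g p"
  by (simp add: klin_def kscale_diff sum_subtractf)

lemma klin_fun_kscale: "klin (\<lambda>x. kscale c (f x)) p = kscale c (klin f p)"
  by (simp add: klin_def kscale_sum mult.commute)

lemma kspan_uminus: "p \<in> kspan G \<Longrightarrow> - p \<in> kspan G"
proof -
  assume "p \<in> kspan G"
  then have "kscale (- 1) p \<in> kspan G" by (rule kspan_scale)
  then show ?thesis by simp
qed

lemma kspan_diff: "p \<in> kspan G \<Longrightarrow> q \<in> kspan G \<Longrightarrow> p - q \<in> kspan G"
  using kspan_add[of p G "- q"] kspan_uminus by fastforce

lemma kspan_sum: "(\<And>x. x \<in> S \<Longrightarrow> f x \<in> kspan G) \<Longrightarrow> sum f S \<in> kspan G"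
  by (induction S rule: infinite_finite_induct) (auto intro: kspan_zero kspan_add)

lemma kspan_klin: "(\<And>x. x \<in> Poly_Mapping.keys p \<Longrightarrow> f x \<in> kspan G) \<Longrightarrow> klin f p \<in> kspan G"
  unfolding klin_def by (rule kspan_sum) (auto intro: kspan_scale)

lemma klin_kspan_image:
  assumes "q \<in> kspan G" "\<And>g. g \<in> G \<Longrightarrow> klin f g \<in> kspan H"
  shows "klin f q \<in> kspan H"
  using assms(1)
  by induction (auto simp: assms(2) klin_add klin_kscale intro: kspan_zero kspan_add kspan_scale)

lemma lin_gens_slot_add:
  "basis (xs @ (a + b) # ys) - basis (xs @ a # ys) - basis (xs @ b # ys)
     \<in> lin_gens phi {(\<lambda>a. xs @ a # ys) | xs ys. True}"
  unfolding lin_gens_def by (rule UnI1, rule CollectI, rule exI[where x="\<lambda>a. xs @ a # ys"]) auto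

lemma lin_gens_slot_scale:
  "basis (xs @ (phi c * a) # ys) - kscale c (basis (xs @ a # ys))
     \<in> lin_gens phi {(\<lambda>a. xs @ a # ys) | xs ys. True}"
  unfolding lin_gens_def by (rule UnI2, rule CollectI, rule exI[where x="\<lambda>a. xs @ a # ys"]) auto

lemma sha_rel_add: "p \<in> sha_rel phi \<Longrightarrow> q \<in> sha_rel phi \<Longrightarrow> p + q \<in> sha_rel phi"
  unfolding sha_rel_def by (rule kspan_add)

lemma sha_rel_diff: "p \<in> sha_rel phi \<Longrightarrow> q \<in> sha_rel phi \<Longrightarrow> p - q \<in> sha_rel phi"
  unfolding sha_rel_def by (rule kspan_diff)

lemma sha_rel_kscale: "p \<in> sha_rel phi \<Longrightarrow> kscale c p \<in> sha_rel phi"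
  unfolding sha_rel_def by (rule kspan_scale)

lemma sha_rel_klin:
  "(\<And>x. x \<in> Poly_Mapping.keys p \<Longrightarrow> f x \<in> sha_rel phi) \<Longrightarrow> klin f p \<in> sha_rel phi"
  unfolding sha_rel_def by (rule kspan_klin)

lemma sha_rel_basis_Nil: "basis [] \<in> sha_rel phi"
  unfolding sha_rel_def by (blast intro: kspan_gen)

lemma sha_rel_slot_add:
  "basis (xs @ (a + b) # ys) - basis (xs @ a # ys) - basis (xs @ b # ys) \<in> sha_rel phi"
  unfolding sha_rel_def by (blast intro: kspan_gen lin_gens_slot_add)

lemma sha_rel_slot_scale:
  "basis (xs @ (phi c * a) # ys) - kscale c (basis (xs @ a # ys)) \<in> sha_rel phi"
  unfolding sha_rel_def by (blast intro: kspan_gen lin_gens_slot_scale)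

lemma sha_rel_klin_prepend:
  assumes "q \<in> sha_rel phi"
  shows "klin (prepend c) q \<in> sha_rel phi"
  using assms unfolding sha_rel_def
proof (rule klin_kspan_image)
  fix g
  assume "g \<in> lin_gens phi {(\<lambda>a. xs @ a # ys) | xs ys. True} \<union> {basis []}"
  then consider (add) xs ys a b
      where "g = basis (xs @ (a + b) # ys) - basis (xs @ a # ys) - basis (xs @ b # ys)"
    | (scale) xs ys d a where "g = basis (xs @ (phi d * a) # ys) - kscale d (basis (xs @ a # ys))"
    | (Nil) "g = basis []"
    unfolding lin_gens_def by blast
  then have "klin (prepend c) g \<in> sha_rel phi"
  proof cases
    case (add xs ys a b)
    then show ?thesis
      using sha_rel_slot_add[of "c # xs"] by (simp add: klin_diff prepend_def)
  next
    case (scale xs ys d a)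
    then show ?thesis
      using sha_rel_slot_scale[of "c # xs"] by (simp add: klin_diff klin_kscale prepend_def)
  next
    case Nil
    then show ?thesis by (simp add: prepend_def sha_rel_def kspan_zero)
  qed
  then show "klin (prepend c) g \<in> kspan (lin_gens phi {(\<lambda>a. xs @ a # ys) | xs ys. True} \<union> {basis []})"
    unfolding sha_rel_def .
qed

lemma sha_rel_slot_sum:
  fixes phi :: "'k::comm_ring_1 \<Rightarrow> 'a::comm_ring_1"
  assumes "finite S"
  shows "(\<Sum>z\<in>S. kscale (c z) (basis (xs @ w z # ys)))
           - basis (xs @ (\<Sum>z\<in>S. phi (c z) * w z) # ys) \<in> sha_rel phi"
  using assms
proof (induction S rule: finite_induct)
  case empty
  show ?case using sha_rel_slot_add[of xs 0 0 ys phi] by simp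
next
  case (insert z S)
  let ?a = "phi (c z) * w z" and ?b = "\<Sum>z\<in>S. phi (c z) * w z"
  have "(\<Sum>z\<in>insert z S. kscale (c z) (basis (xs @ w z # ys)))
          - basis (xs @ (\<Sum>z\<in>insert z S. phi (c z) * w z) # ys)
      = ((\<Sum>z\<in>S. kscale (c z) (basis (xs @ w z # ys))) - basis (xs @ ?b # ys))
        - (basis (xs @ ?a # ys) - kscale (c z) (basis (xs @ w z # ys)))
        - (basis (xs @ (?a + ?b) # ys) - basis (xs @ ?a # ys) - basis (xs @ ?b # ys))"
    using insert by simp
  also have "\<dots> \<in> sha_rel phi"
    by (intro sha_rel_diff insert.IH sha_rel_slot_scale sha_rel_slot_add)
  finally show ?case .
qed

lemma sha_rel_counit_slot:
  assumes "left_counital_bialgebra phi Delta eps"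
  shows "klin (\<lambda>(x, y). kscale (eps x) (basis (xs @ y # ys))) (Delta a) - basis (xs @ a # ys)
           \<in> sha_rel phi"
proof -
  let ?D = "Delta a"
  from assms have phi_mult: "\<And>c d. phi (c * d) = phi c * phi d"
    and counit: "(\<Sum>(x, y)\<in>Poly_Mapping.keys ?D.
                    phi (Poly_Mapping.lookup ?D (x, y)) * phi (eps x) * y) = a"
    unfolding left_counital_bialgebra_def by auto
  have klin_eq: "klin (\<lambda>(x, y). kscale (eps x) (basis (xs @ y # ys))) ?D
      = (\<Sum>z\<in>Poly_Mapping.keys ?D.
           kscale (Poly_Mapping.lookup ?D z * eps (fst z)) (basis (xs @ snd z # ys)))"
    by (simp add: klin_def case_prod_beta)
  have a_eq: "(\<Sum>z\<in>Poly_Mapping.keys ?D. phi (Poly_Mapping.lookup ?D z * eps (fst z)) * snd z) = a"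
    by (subst counit[symmetric]) (simp add: case_prod_beta phi_mult)
  show ?thesis
    using sha_rel_slot_sum[of "Poly_Mapping.keys ?D" "\<lambda>z. Poly_Mapping.lookup ?D z * eps (fst z)"
        xs snd ys phi]
    by (simp only: klin_eq a_eq finite_keys)
qed

lemma epsT_tensor_id_emb2:
  "epsT_tensor_id eps (emb2 D) = klin (\<lambda>(x, y). kscale (eps x) (basis [y])) D"
  unfolding epsT_tensor_id_def emb2_def klin_klin
  by (rule klin_cong) (auto simp: epsT_basis_def)

lemma epsT_tensor_id_id_Pr:
  "epsT_tensor_id eps (id_Pr X) = klin (prepend 1) (epsT_tensor_id eps X)"
  unfolding epsT_tensor_id_def id_Pr_def klin_klin
  by (rule klin_cong) (auto simp: klin_kscale prepend_def)

text \<open>Only the tensors \<open>x \<otimes> y\<close> with \<open>y\<close> nonempty survive \<open>id \<otimes> P\<^sub>r\<close>, so the product with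
  \<open>\<Delta>\<^sub>A(a)\<close> is computed by the first two cases of \<open>\<diamond>\<close>.\<close>

lemma shuf_single_left: "shuf [x] u = (case u of [] \<Rightarrow> 0 | c # cs \<Rightarrow> basis (x * c # cs))"
  by (cases u) auto

lemma epsT_tensor_id_bullet_emb2:
  assumes eps_mult: "\<And>a b. eps (a * b) = eps a * eps b"
  shows "epsT_tensor_id eps (bullet (emb2 D) (id_Pr Y))
           = klin (\<lambda>(x, y). kscale (eps x) (klin (prepend y) (epsT_tensor_id eps Y))) D"
proof -
  have bullet_emb2: "bullet (emb2 D) Q = klin (\<lambda>(x, y). klin (\<lambda>(x', y').
      kbilin (\<lambda>u v. basis (u, v)) (shuf [x] x') (shuf [y] y')) Q) D" for Q
    unfolding bullet_def kbilin_def emb2_def klin_klin by (rule klin_cong) auto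
  have bullet_summand: "epsT_tensor_id eps (klin (\<lambda>(x', y').
        kbilin (\<lambda>u v. basis (u, v)) (shuf [x] x') (shuf [y] y')) (id_Pr Y))
      = kscale (eps x) (klin (prepend y) (epsT_tensor_id eps Y))" for x y
    unfolding epsT_tensor_id_def id_Pr_def klin_klin klin_fun_kscale[symmetric]
    by (rule klin_cong)
      (auto simp: shuf_single_left prepend_def kbilin_def klin_kscale epsT_basis_def eps_mult
                  mult.commute mult.left_commute split: list.split)
  show ?thesis
    unfolding bullet_emb2 by (subst epsT_tensor_id_def, subst klin_klin, fold epsT_tensor_id_def)
      (rule klin_cong, clarsimp simp: bullet_summand)
qed

lemma epsT_tensor_id_DeltaT_basis:
  assumes bialg: "left_counital_bialgebra phi Delta eps"
  shows "epsT_tensor_id eps (DeltaT_basis Delta l) - basis l \<in> sha_rel phi"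
proof (induction l rule: induct_list012)
  case 1
  show ?case
    using sha_rel_kscale[OF sha_rel_basis_Nil, of "- 1"] by (simp add: epsT_tensor_id_def)
next
  case (2 a)
  show ?case
    using sha_rel_counit_slot[OF bialg, of "[]" "[]" a] by (simp add: epsT_tensor_id_emb2)
next
  case (3 a b l)
  let ?W = "epsT_tensor_id eps (DeltaT_basis Delta (b # l)) - basis (b # l)"
  have W: "?W \<in> sha_rel phi" by (rule "3.IH"(2))
  show ?case
  proof (cases "a = 1")
    case True
    then have "epsT_tensor_id eps (DeltaT_basis Delta (a # b # l)) - basis (a # b # l)
        = klin (prepend 1) ?W"
      by (simp add: epsT_tensor_id_id_Pr klin_diff prepend_def)
    then show ?thesis using sha_rel_klin_prepend[OF W] by simp
  next
    case False
    from bialg have eps_mult: "\<And>a b. eps (a * b) = eps a * eps b"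
      unfolding left_counital_bialgebra_def by blast
    have "klin (prepend y) (epsT_tensor_id eps (DeltaT_basis Delta (b # l)))
        = klin (prepend y) ?W + basis (y # b # l)" for y
      by (simp add: klin_diff prepend_def)
    then have "epsT_tensor_id eps (DeltaT_basis Delta (a # b # l)) - basis (a # b # l)
        = klin (\<lambda>(x, y). kscale (eps x) (klin (prepend y) ?W)) (Delta a)
          + (klin (\<lambda>(x, y). kscale (eps x) (basis ([] @ y # b # l))) (Delta a)
             - basis ([] @ a # b # l))"
      using False
      by (simp add: epsT_tensor_id_bullet_emb2[OF eps_mult] kscale_add split_def klin_fun_add)
    also have "\<dots> \<in> sha_rel phi"
      using W by (intro sha_rel_add sha_rel_klin sha_rel_counit_slot[OF bialg])
        (auto intro: sha_rel_kscale sha_rel_klin_prepend)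
    finally show ?thesis .
  qed
qed

theorem proposition3p7:
  fixes phi :: "'k::comm_ring_1 \<Rightarrow> 'a::comm_ring_1"
    and Delta :: "'a \<Rightarrow> ('a \<times> 'a \<Rightarrow>\<^sub>0 'k)"
    and eps :: "'a \<Rightarrow> 'k"
  assumes "left_counital_bialgebra phi Delta eps"
  shows "\<forall>u :: 'a list \<Rightarrow>\<^sub>0 'k. epsT_tensor_id eps (DeltaT Delta u) - u \<in> sha_rel phi"
proof
  fix u :: "'a list \<Rightarrow>\<^sub>0 'k"
  have "epsT_tensor_id eps (DeltaT Delta u) - u
      = klin (\<lambda>l. epsT_tensor_id eps (DeltaT_basis Delta l) - basis l) u"
    by (simp add: klin_fun_diff klin_basis_self DeltaT_def epsT_tensor_id_def klin_klin)
  also have "\<dots> \<in> sha_rel phi"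
    by (rule sha_rel_klin) (rule epsT_tensor_id_DeltaT_basis[OF assms])
  finally show "epsT_tensor_id eps (DeltaT Delta u) - u \<in> sha_rel phi" .
qed

end
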